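(* Let $n\ge 1$ and assume all matrices $\Lambda_{k-1}$ ($0\le k\le n+1$) and all elements $H_k,\tau_k$ ($0\le k\le n+1$) below are invertible. Then the monic noncommutative Laurent biorthogonal polynomials satisfy the three-term recurrence relation $$\lambda\big(P_n(\lambda)+a_nP_{n-1}(\lambda)\big)=P_{n+1}(\lambda)+b_nP_n(\lambda),$$ where $$a_n=-\tau_n\tau_{n-1}^{-1},\qquad b_n=a_nH_{n-1}H_n^{-1}.$$
   Context: Let $R$ be a skew field containing elements $m_i$, $i\in\mathbb Z$ (the moments), and equipped with an involution $a\mapsto a^*$ (an anti-automorphism of order two). For polynomials / formal Laurent series in a commuting indeterminate $\lambda$ with coefficients in $R$, extend the involution by $(\sum_i a_i\lambda^i)^*=\sum_i a_i^*\lambda^{-i}$. Define the pairing $$\Big\langle \sum_i a_i\lambda^i,\sum_j b_j\lambda^j\Big\rangle=\sum_{i,j}a_i\,m_{i-j}\,b_j^*.$$ It is left $R$-linear in the first argument, satisfies $\langle p,\beta q\rangle=\langle p,q\rangle\beta^*$, and $\langle\lambda p,q\rangle=\langle p,\lambda^{-1}q\rangle$. For $n\ge 0$, let $\Lambda_{n-1}=(m_{i-j})_{i,j=0}^{n-1}$, an $n\times n$ matrix over $R$, assumed invertible. The empty matrix is used for $n=0$. Let $\theta_n=(m_n,m_{n-1},\dots,m_1)$ be a row vector. The monic Laurent biorthogonal polynomials are $$P_n(\lambda)=\lambda^n-\theta_n\Lambda_{n-1}^{-1}(1,\lambda,\dots,\lambda^{n-1})^T,$$ with $P_0=1$. Equivalently,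 $P_n$ is the unique monic polynomial of degree $n$ with $\langle P_n,\lambda^j\rangle=0$ for $0\le j\le n-1$. The companion family $Q_n$ consists of monic polynomials of degree $n$ with $$\langle P_n,Q_m\rangle=H_n\delta_{nm}.$$ Here $$H_n=m_0-\theta_n\Lambda_{n-1}^{-1}(m_{-n},m_{-n+1},\dots,m_{-1})^T,$$ so that $H_0=m_0$, and $$\tau_n=m_{n+1}-\theta_n\Lambda_{n-1}^{-1}(m_1,m_2,\dots,m_n)^T,$$ so that $\tau_0=m_1$. (These are the quasideterminants of the corresponding bordered $(n+1)\times(n+1)$ moment matrices with boxed bottom-right entry; in particular $\tau_n=\langle P_n,\lambda^{-1}\rangle$.) *)

theory Defs
  imports Main
begin

text \<open>Matrices over a (possibly noncommutative) ring are represented as functions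
  nat => nat => 'a, of which only the entries with indices < k matter (k = size).
  Polynomials in the commuting indeterminate lambda are represented by their
  coefficient sequences nat => 'a (coefficient of lambda^j at index j).\<close>

definition involution :: "('a::ring_1 \<Rightarrow> 'a) \<Rightarrow> bool" where
  "involution s \<longleftrightarrow> (\<forall>a b. s (a + b) = s a + s b) \<and> (\<forall>a b. s (a * b) = s b * s a)
     \<and> s 1 = 1 \<and> (\<forall>a. s (s a) = a)"

definition sq_mat_mul :: "nat \<Rightarrow> (nat \<Rightarrow> nat \<Rightarrow> 'a::ring_1) \<Rightarrow> (nat \<Rightarrow> nat \<Rightarrow> 'a) \<Rightarrow> nat \<Rightarrow> nat \<Rightarrow> 'a" where
  "sq_mat_mul k A B i j = (\<Sum>l<k. A i l * B l j)"

definition is_inverse_of :: "nat \<Rightarrow> (nat \<Rightarrow> nat \<Rightarrow> 'a::ring_1) \<Rightarrow> (nat \<Rightarrow> nat \<Rightarrow> 'a) \<Rightarrow> bool" where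
  "is_inverse_of k B A \<longleftrightarrow>
     (\<forall>i<k. \<forall>j<k. sq_mat_mul k A B i j = (if i = j then 1 else 0)) \<and>
     (\<forall>i<k. \<forall>j<k. sq_mat_mul k B A i j = (if i = j then 1 else 0))"

definition sq_invertible :: "nat \<Rightarrow> (nat \<Rightarrow> nat \<Rightarrow> 'a::ring_1) \<Rightarrow> bool" where
  "sq_invertible k A \<longleftrightarrow> (\<exists>B. is_inverse_of k B A)"

definition sq_inv :: "nat \<Rightarrow> (nat \<Rightarrow> nat \<Rightarrow> 'a::ring_1) \<Rightarrow> nat \<Rightarrow> nat \<Rightarrow> 'a" where
  "sq_inv k A = (SOME B. is_inverse_of k B A)"

text \<open>Lambda_{k-1} = (m_{i-j})_{i,j=0}^{k-1}, a k x k matrix.\<close>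
definition moment_mat :: "(int \<Rightarrow> 'a) \<Rightarrow> nat \<Rightarrow> nat \<Rightarrow> 'a" where
  "moment_mat m i j = m (int i - int j)"

definition theta :: "(int \<Rightarrow> 'a) \<Rightarrow> nat \<Rightarrow> nat \<Rightarrow> 'a" where
  "theta m n i = m (int n - int i)"

definition thetaLinv :: "(int \<Rightarrow> 'a::ring_1) \<Rightarrow> nat \<Rightarrow> nat \<Rightarrow> 'a" where
  "thetaLinv m n j = (\<Sum>i<n. theta m n i * sq_inv n (moment_mat m) i j)"

text \<open>P_n(lambda) = lambda^n - theta_n Lambda_{n-1}^{-1} (1, lambda, ..., lambda^{n-1})^T.\<close>
definition LBP :: "(int \<Rightarrow> 'a::ring_1) \<Rightarrow> nat \<Rightarrow> nat \<Rightarrow> 'a" where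
  "LBP m n k = (if k = n then 1 else if k < n then - thetaLinv m n k else 0)"

definition Hq :: "(int \<Rightarrow> 'a::ring_1) \<Rightarrow> nat \<Rightarrow> 'a" where
  "Hq m n = m 0 - (\<Sum>j<n. thetaLinv m n j * m (int j - int n))"

definition tauq :: "(int \<Rightarrow> 'a::ring_1) \<Rightarrow> nat \<Rightarrow> 'a" where
  "tauq m n = m (int n + 1) - (\<Sum>j<n. thetaLinv m n j * m (int j + 1))"

definition shiftX :: "(nat \<Rightarrow> 'a::zero) \<Rightarrow> nat \<Rightarrow> 'a" where
  "shiftX p k = (if k = 0 then 0 else p (k - 1))"

definition cadd :: "(nat \<Rightarrow> 'a::plus) \<Rightarrow> (nat \<Rightarrow> 'a) \<Rightarrow> nat \<Rightarrow> 'a" where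
  "cadd p q k = p k + q k"

definition lscale :: "'a::times \<Rightarrow> (nat \<Rightarrow> 'a) \<Rightarrow> nat \<Rightarrow> 'a" where
  "lscale a p k = a * p k"

end

theory Submission
  imports Defs
begin

text \<open>Both sides are polynomials of degree n + 1 with leading coefficient 1, so their difference
  has degree at most n; as \<open>\<Lambda>\<^sub>n\<close> is invertible, it vanishes once it is orthogonal to
  \<open>1, \<lambda>, \<dots>, \<lambda>^n\<close>. Multiplication by \<open>\<lambda>\<close> turns the pairing with \<open>\<lambda>^j\<close> into the pairing with
  \<open>\<lambda>^(j-1)\<close>, so by orthogonality of \<open>P\<^sub>n\<close> and \<open>P\<^sub>n\<^sub>-\<^sub>1\<close> only two of these pairings can be
  nonzero: at j = 0 the left side gives \<open>\<tau>\<^sub>n + a\<^sub>n \<tau>\<^sub>n\<^sub>-\<^sub>1 = 0\<close>, and at j = n the two sides give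
  \<open>a\<^sub>n H\<^sub>n\<^sub>-\<^sub>1 = b\<^sub>n H\<^sub>n\<close>. Only pairings against powers of \<open>\<lambda>\<close> occur.\<close>

definition degree_less :: "nat \<Rightarrow> (nat \<Rightarrow> 'a::zero) \<Rightarrow> bool" where
  "degree_less N p \<longleftrightarrow> (\<forall>i\<ge>N. p i = 0)"

text \<open>The pairing \<open>\<langle>p, \<lambda>^j\<rangle>\<close> of a polynomial p of degree less than N; j may be negative.\<close>
definition moment_pairing :: "(int \<Rightarrow> 'a::ring_1) \<Rightarrow> nat \<Rightarrow> (nat \<Rightarrow> 'a) \<Rightarrow> int \<Rightarrow> 'a" where
  "moment_pairing m N p j = (\<Sum>i<N. p i * m (int i - j))"

lemma moment_pairing_degree_less:
  assumes "degree_less K p" "K \<le> N"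
  shows "moment_pairing m N p j = moment_pairing m K p j"
  unfolding moment_pairing_def
  by (rule sum.mono_neutral_right) (use assms in \<open>auto simp: degree_less_def\<close>)

lemma moment_pairing_shiftX: "moment_pairing m (Suc N) (shiftX p) j = moment_pairing m N p (j - 1)"
  unfolding moment_pairing_def sum.lessThan_Suc_shift
  by (simp add: shiftX_def algebra_simps)

lemma moment_pairing_cadd:
  "moment_pairing m N (cadd p q) j = moment_pairing m N p j + moment_pairing m N q j"
  unfolding moment_pairing_def cadd_def by (simp add: distrib_right sum.distrib)

lemma moment_pairing_lscale: "moment_pairing m N (lscale a p) j = a * moment_pairing m N p j"
  unfolding moment_pairing_def lscale_def by (simp add: sum_distrib_left mult.assoc)

lemma moment_pairing_diff:
  "moment_pairing m N (\<lambda>i. p i - q i) j = moment_pairing m N p j - moment_pairing m N q j"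
  unfolding moment_pairing_def by (simp add: left_diff_distrib sum_subtractf)

lemma is_inverse_of_sq_inv: "sq_invertible k A \<Longrightarrow> is_inverse_of k (sq_inv k A) A"
  unfolding sq_invertible_def sq_inv_def by (metis someI_ex)

lemma moment_pairing_nondegenerate:
  fixes p :: "nat \<Rightarrow> 'a::ring_1"
  assumes "sq_invertible K (moment_mat m)" "degree_less K p"
    and orth: "\<forall>j<K. moment_pairing m K p (int j) = 0"
  shows "p = (\<lambda>_. 0)"
proof
  fix k
  let ?A = "moment_mat m" and ?B = "sq_inv K (moment_mat m)"
  have inv: "is_inverse_of K ?B ?A" using is_inverse_of_sq_inv[OF assms(1)] .
  show "p k = 0"
  proof (cases "k < K")
    case True
    have "p k = (\<Sum>i<K. p i * (if i = k then 1 else 0))"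
      using True by (simp add: if_distrib cong: if_cong)
    also have "\<dots> = (\<Sum>i<K. p i * sq_mat_mul K ?A ?B i k)"
      using inv True unfolding is_inverse_of_def by (intro sum.cong) auto
    also have "\<dots> = (\<Sum>j<K. moment_pairing m K p (int j) * ?B j k)"
      unfolding sq_mat_mul_def moment_pairing_def moment_mat_def sum_distrib_left sum_distrib_right
      by (subst sum.swap) (simp add: mult.assoc)
    also have "\<dots> = 0" using orth by simp
    finally show ?thesis .
  qed (use assms(2) in \<open>simp add: degree_less_def\<close>)
qed

lemma eq_by_moment_pairing:
  fixes p q :: "nat \<Rightarrow> 'a::ring_1"
  assumes "sq_invertible K (moment_mat m)"
    and "degree_less (Suc K) p" "degree_less (Suc K) q" "p K = q K"
    and "\<forall>j<K. moment_pairing m (Suc K) p (int j) = moment_pairing m (Suc K) q (int j)"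
  shows "p = q"
proof -
  have deg: "degree_less K (\<lambda>i. p i - q i)"
    using assms(2-4) unfolding degree_less_def by (metis Suc_leI le_neq_implies_less diff_self)
  have "moment_pairing m K (\<lambda>i. p i - q i) j
      = moment_pairing m (Suc K) p j - moment_pairing m (Suc K) q j" for j
    unfolding moment_pairing_degree_less[OF deg le_SucI[OF order_refl], symmetric]
    by (rule moment_pairing_diff)
  then have "\<forall>j<K. moment_pairing m K (\<lambda>i. p i - q i) (int j) = 0"
    using assms(5) by simp
  then have "(\<lambda>i. p i - q i) = (\<lambda>_. 0)"
    using moment_pairing_nondegenerate[OF assms(1) deg] by blast
  then show ?thesis by (simp add: fun_eq_iff)
qed

lemma degree_less_LBP: "degree_less (Suc n) (LBP m n)"
  unfolding degree_less_def LBP_def by simp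

lemma moment_pairing_LBP:
  assumes "Suc n \<le> N"
  shows "moment_pairing m N (LBP m n) j = m (int n - j) - (\<Sum>i<n. thetaLinv m n i * m (int i - j))"
  unfolding moment_pairing_degree_less[OF degree_less_LBP assms]
  by (simp add: moment_pairing_def LBP_def sum.lessThan_Suc sum_negf)

lemma thetaLinv_times_moments:
  fixes m :: "int \<Rightarrow> 'a::ring_1"
  assumes "sq_invertible n (moment_mat m)" "j < n"
  shows "(\<Sum>i<n. thetaLinv m n i * m (int i - int j)) = m (int n - int j)"
proof -
  let ?B = "sq_inv n (moment_mat m)"
  have inv: "is_inverse_of n ?B (moment_mat m)" using is_inverse_of_sq_inv[OF assms(1)] .
  have "(\<Sum>i<n. thetaLinv m n i * m (int i - int j))
      = (\<Sum>k<n. theta m n k * sq_mat_mul n ?B (moment_mat m) k j)"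
    unfolding thetaLinv_def moment_mat_def sq_mat_mul_def sum_distrib_left sum_distrib_right
    by (subst sum.swap) (simp add: mult.assoc)
  also have "\<dots> = (\<Sum>k<n. theta m n k * (if k = j then 1 else 0))"
    using inv assms(2) unfolding is_inverse_of_def by (intro sum.cong) auto
  also have "\<dots> = theta m n j"
    using assms(2) by (simp add: if_distrib cong: if_cong)
  finally show ?thesis by (simp add: theta_def)
qed

lemma moment_pairing_LBP_orthogonal:
  assumes "sq_invertible n (moment_mat m)" "Suc n \<le> N" "j < n"
  shows "moment_pairing m N (LBP m n) (int j) = 0"
  using thetaLinv_times_moments[OF assms(1,3)] by (simp add: moment_pairing_LBP[OF assms(2)])

lemma moment_pairing_LBP_Hq: "Suc n \<le> N \<Longrightarrow> moment_pairing m N (LBP m n) (int n) = Hq m n"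
  by (simp add: moment_pairing_LBP Hq_def)

lemma moment_pairing_LBP_tauq: "Suc n \<le> N \<Longrightarrow> moment_pairing m N (LBP m n) (- 1) = tauq m n"
  by (simp add: moment_pairing_LBP tauq_def add.commute)

lemma moment_pairing_lambda_LBP_step:
  fixes m :: "int \<Rightarrow> 'a::ring_1"
  assumes "sq_invertible (n - 1) (moment_mat m)" "sq_invertible n (moment_mat m)"
    and "n \<ge> 1" "a * tauq m (n - 1) = - tauq m n" "j \<le> n"
  shows "moment_pairing m (Suc (Suc n)) (shiftX (cadd (LBP m n) (lscale a (LBP m (n - 1))))) (int j)
       = (if j = n then a * Hq m (n - 1) else 0)"
proof -
  have "moment_pairing m (Suc (Suc n)) (shiftX (cadd (LBP m n) (lscale a (LBP m (n - 1))))) (int j)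
      = moment_pairing m (Suc n) (LBP m n) (int j - 1)
        + a * moment_pairing m (Suc n) (LBP m (n - 1)) (int j - 1)"
    by (simp add: moment_pairing_shiftX moment_pairing_cadd moment_pairing_lscale)
  also have "\<dots> = (if j = n then a * Hq m (n - 1) else 0)"
  proof (cases j)
    case 0
    then show ?thesis using assms(3,4) by (simp add: moment_pairing_LBP_tauq)
  next
    case (Suc i)
    then have "int j - 1 = int i" "i < n" using assms(5) by auto
    moreover have "moment_pairing m (Suc n) (LBP m (n - 1)) (int i)
        = (if i = n - 1 then Hq m (n - 1) else 0)"
      using \<open>i < n\<close> assms(1) moment_pairing_LBP_Hq[of "n - 1" "Suc n" m]
      by (cases "i = n - 1") (simp_all add: moment_pairing_LBP_orthogonal)
    ultimately show ?thesis
      using Suc assms(2) by (auto simp: moment_pairing_LBP_orthogonal)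
  qed
  finally show ?thesis .
qed

lemma moment_pairing_LBP_step:
  fixes m :: "int \<Rightarrow> 'a::ring_1"
  assumes "sq_invertible n (moment_mat m)" "sq_invertible (Suc n) (moment_mat m)" "j \<le> n"
  shows "moment_pairing m (Suc (Suc n)) (cadd (LBP m (Suc n)) (lscale b (LBP m n))) (int j)
       = (if j = n then b * Hq m n else 0)"
  using assms by (auto simp: moment_pairing_cadd moment_pairing_lscale moment_pairing_LBP_Hq
      moment_pairing_LBP_orthogonal)

theorem proposition1:
  fixes m :: "int \<Rightarrow> 'a::division_ring" and star :: "'a \<Rightarrow> 'a" and n :: nat
  assumes "involution star"
    and "n \<ge> 1"
    and "\<forall>k\<le>n+1. sq_invertible k (moment_mat m)"
    and "\<forall>k\<le>n+1. Hq m k \<noteq> 0"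
    and "\<forall>k\<le>n+1. tauq m k \<noteq> 0"
  shows "let a = - tauq m n * inverse (tauq m (n - 1));
             b = a * Hq m (n - 1) * inverse (Hq m n)
         in shiftX (cadd (LBP m n) (lscale a (LBP m (n - 1))))
            = cadd (LBP m (n + 1)) (lscale b (LBP m n))"
proof -
  define a where "a = - tauq m n * inverse (tauq m (n - 1))"
  define b where "b = a * Hq m (n - 1) * inverse (Hq m n)"
  define lhs where "lhs = shiftX (cadd (LBP m n) (lscale a (LBP m (n - 1))))"
  define rhs where "rhs = cadd (LBP m (Suc n)) (lscale b (LBP m n))"
  have a: "a * tauq m (n - 1) = - tauq m n"
    using assms(5) unfolding a_def by (simp add: mult.assoc)
  have b: "b * Hq m n = a * Hq m (n - 1)"
    using assms(4) unfolding b_def by (simp add: mult.assoc)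
  have "\<forall>j<Suc n. moment_pairing m (Suc (Suc n)) lhs (int j) = moment_pairing m (Suc (Suc n)) rhs (int j)"
    using moment_pairing_lambda_LBP_step[of n m a] moment_pairing_LBP_step[of n m _ b] assms(2,3) a b
    unfolding lhs_def rhs_def by simp
  moreover have "degree_less (Suc (Suc n)) lhs" "degree_less (Suc (Suc n)) rhs" "lhs (Suc n) = rhs (Suc n)"
    using assms(2) by (auto simp: lhs_def rhs_def degree_less_def shiftX_def cadd_def lscale_def LBP_def)
  moreover have "sq_invertible (Suc n) (moment_mat m)" using assms(3) by simp
  ultimately have "lhs = rhs" by (intro eq_by_moment_pairing)
  then show ?thesis unfolding lhs_def rhs_def a_def b_def Let_def by simp
qed

end
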